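(* Let $\rho:\mathfrak{k}\to\mathrm{End}(\mathbb{C}^s)$ be a generalized spin representation of $\mathfrak{k}$, i.e. a Lie algebra representation such that $\rho(X_i)^2=-\frac14\,\mathrm{id}_s$ for all $i=1,\dots,n$. Write $[A,B]=AB-BA$ and $\{A,B\}=AB+BA$. Then for all $1\le i\neq j\le n$: $[\rho(X_i),\rho(X_j)]=0$ if $a_{ij}=0$ (i.e. $i,j$ do not form an edge of the Dynkin diagram), and $\{\rho(X_i),\rho(X_j)\}=0$ if $a_{ij}=-1$ (i.e. $i,j$ form an edge of the Dynkin diagram).
   Context: Let $A=(a_{ij})_{1\le i,j\le n}$ be a symmetrizable generalized Cartan matrix that is simply laced (all off-diagonal entries are $0$ or $-1$); its Dynkin diagram has vertices $1,\dots,n$ and an edge between $i\neq j$ iff $a_{ij}=-1$. Let $\mathfrak{g}=\mathfrak{g}(A)$ be the split real Kac–Moody algebra with Chevalley generators $e_i,f_i$ and Cartan subalgebra $\mathfrak h$, and let $\omega$ be its Chevalley involution ($\omega(e_i)=-f_i$, $\omega(f_i)=-e_i$, $\omega(h)=-h$ for $h\in\mathfrak h$). The maximal compact subalgebra is $\mathfrak{k}=\mathrm{Fix}(\omega)$. The Berman generators are $X_i:=e_i-f_i\in\mathfrak k$; $\mathfrak{k}$ is isomorphic to the real Lie algebra generated by $X_1,\dots,X_n$ subject to the relations $[X_i,[X_i,X_j]]=-X_j$ if $a_{ij}=-1$ and $[X_i,X_j]=0$ if $a_{ij}=0$. *)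

theory Defs
  imports "HOL-Analysis.Analysis"
begin

type_synonym 's cmat = "complex ^ 's ^ 's"

definition commutator :: "'s::finite cmat \<Rightarrow> 's cmat \<Rightarrow> 's cmat" where
  "commutator P Q = P ** Q - Q ** P"

definition anticommutator :: "'s::finite cmat \<Rightarrow> 's cmat \<Rightarrow> 's cmat" where
  "anticommutator P Q = P ** Q + Q ** P"

definition gcm :: "nat \<Rightarrow> (nat \<Rightarrow> nat \<Rightarrow> int) \<Rightarrow> bool" where
  "gcm n a \<longleftrightarrow> (\<forall>i\<in>{1..n}. a i i = 2) \<and>
     (\<forall>i\<in>{1..n}. \<forall>j\<in>{1..n}. i \<noteq> j \<longrightarrow> a i j \<le> 0) \<and>
     (\<forall>i\<in>{1..n}. \<forall>j\<in>{1..n}. a i j = 0 \<longleftrightarrow> a j i = 0)"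

definition symmetrizable :: "nat \<Rightarrow> (nat \<Rightarrow> nat \<Rightarrow> int) \<Rightarrow> bool" where
  "symmetrizable n a \<longleftrightarrow> (\<exists>d :: nat \<Rightarrow> real. (\<forall>i\<in>{1..n}. d i > 0) \<and>
     (\<forall>i\<in>{1..n}. \<forall>j\<in>{1..n}. d i * of_int (a i j) = d j * of_int (a j i)))"

definition simply_laced :: "nat \<Rightarrow> (nat \<Rightarrow> nat \<Rightarrow> int) \<Rightarrow> bool" where
  "simply_laced n a \<longleftrightarrow> (\<forall>i\<in>{1..n}. \<forall>j\<in>{1..n}. i \<noteq> j \<longrightarrow> a i j = 0 \<or> a i j = -1)"

text \<open>A (real) Lie algebra representation rho of k = k(A) on C^s.  Since k is presented by the
 Berman generators X_1..X_n subject to the Berman relations, such a representation is the same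
 as the assignment R i = rho(X_i) of complex s x s matrices satisfying those relations.\<close>
definition k_rep :: "nat \<Rightarrow> (nat \<Rightarrow> nat \<Rightarrow> int) \<Rightarrow> (nat \<Rightarrow> 's::finite cmat) \<Rightarrow> bool" where
  "k_rep n a R \<longleftrightarrow>
     (\<forall>i\<in>{1..n}. \<forall>j\<in>{1..n}. i \<noteq> j \<longrightarrow> a i j = -1 \<longrightarrow>
        commutator (R i) (commutator (R i) (R j)) = - R j) \<and>
     (\<forall>i\<in>{1..n}. \<forall>j\<in>{1..n}. i \<noteq> j \<longrightarrow> a i j = 0 \<longrightarrow> commutator (R i) (R j) = 0)"

definition generalized_spin_rep :: "nat \<Rightarrow> (nat \<Rightarrow> nat \<Rightarrow> int) \<Rightarrow> (nat \<Rightarrow> 's::finite cmat) \<Rightarrow> bool" where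
  "generalized_spin_rep n a R \<longleftrightarrow> k_rep n a R \<and>
     (\<forall>i\<in>{1..n}. R i ** R i = mat (- 1 / 4))"

end

theory Submission
  imports Defs
begin

text \<open>Put \<open>D = {A, B}\<close>. Expanding gives \<open>[A, [A, B]] + A D + D A = 2 (A\<^sup>2 B + B A\<^sup>2)\<close>, which is
  \<open>-B\<close> when \<open>A\<^sup>2 = -1/4\<close>. So the Berman relation \<open>[A, [A, B]] = -B\<close> says \<open>A D + D A = 0\<close>.
  As \<open>A\<^sup>2\<close> is scalar, \<open>A\<close> commutes with \<open>D\<close>; hence \<open>A D = 0\<close>, and \<open>D = -4 A (A D) = 0\<close>.\<close>

lemma matrix_diff_ldistrib:
  fixes A :: "'a::ring_1 ^ 'n ^ 'm"
  shows "A ** (B - C) = A ** B - A ** C"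
  by (vector matrix_matrix_mult_def sum_subtractf[symmetric] algebra_simps)

lemma matrix_add_rdistrib:
  fixes A B :: "'a::semiring_1 ^ 'n ^ 'm"
  shows "(A + B) ** C = A ** C + B ** C"
  by (vector matrix_matrix_mult_def sum.distrib[symmetric] algebra_simps)

lemma matrix_diff_rdistrib:
  fixes A B :: "'a::ring_1 ^ 'n ^ 'm"
  shows "(A - B) ** C = A ** C - B ** C"
  by (vector matrix_matrix_mult_def sum_subtractf[symmetric] algebra_simps)

lemma mat_matrix_mult: "mat c ** A = (\<chi> i j. (c :: 'a::semiring_1) * A $ i $ j)"
  unfolding matrix_matrix_mult_def mat_def
  by (auto simp: vec_eq_iff if_distrib if_distribR sum.delta'[OF finite] cong: if_cong)

lemma matrix_mat_mult: "A ** mat c = (\<chi> i j. A $ i $ j * (c :: 'a::semiring_1))"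
  unfolding matrix_matrix_mult_def mat_def
  by (auto simp: vec_eq_iff if_distrib if_distribR sum.delta[OF finite] cong: if_cong)

lemma mat_mult_mat: "mat c ** mat d = mat (c * d :: 'a::semiring_1)"
  unfolding mat_matrix_mult by (simp add: vec_eq_iff mat_def)

lemma mat_add_mat: "mat c + mat d = mat (c + d :: 'a::semiring_1)"
  by (vector mat_def)

lemma mat_neg_one_mult:
  fixes A :: "'a::ring_1 ^ 'n ^ 'm"
  shows "mat (- 1) ** A = - A"
  unfolding mat_matrix_mult by (simp add: vec_eq_iff)

lemma mat_commute:
  fixes A :: "'a::comm_semiring_1 ^ 'n ^ 'n"
  shows "mat c ** A = A ** mat c"
  unfolding mat_matrix_mult matrix_mat_mult by (simp add: mult.commute)

lemma double_commutator_add_anticommutator: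
  fixes A B :: "'a::ring_1 ^ 'n ^ 'n"
  defines "D \<equiv> A ** B + B ** A"
  shows "(A ** (A ** B - B ** A) - (A ** B - B ** A) ** A) + (A ** D + D ** A)
    = (A ** A) ** B + (A ** A) ** B + B ** (A ** A) + B ** (A ** A)"
  unfolding D_def
  by (simp add: matrix_diff_ldistrib matrix_diff_rdistrib matrix_add_ldistrib matrix_add_rdistrib
      matrix_mul_assoc algebra_simps)

lemma anticommute_if_square_neg_quarter:
  fixes A B :: "'a::field_char_0 ^ 'n ^ 'n"
  assumes square: "A ** A = mat (- 1 / 4)"
    and berman: "A ** (A ** B - B ** A) - (A ** B - B ** A) ** A = - B"
  shows "A ** B + B ** A = 0"
proof -
  define D where "D = A ** B + B ** A"
  have central: "B ** (A ** A) = (A ** A) ** B"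
    by (simp add: square mat_commute)
  have "(A ** A) ** B + (A ** A) ** B + B ** (A ** A) + B ** (A ** A)
      = (mat (- 1 / 4) + mat (- 1 / 4) + mat (- 1 / 4) + mat (- 1 / 4)) ** B"
    by (simp only: central) (simp only: square matrix_add_rdistrib)
  also have "\<dots> = - B"
    by (simp add: mat_add_mat mat_neg_one_mult)
  finally have "A ** D + D ** A = 0"
    using double_commutator_add_anticommutator[of A B] berman unfolding D_def by simp
  moreover have "D ** A = A ** D"
    unfolding D_def
    by (simp add: matrix_add_ldistrib matrix_add_rdistrib matrix_mul_assoc central[unfolded matrix_mul_assoc]
        add.commute)
  ultimately have AD: "A ** D = 0"
    by (simp add: vec_eq_iff)
  have "D = mat (- 4) ** ((A ** A) ** D)"
    by (simp add: square matrix_mul_assoc mat_mult_mat)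
  also have "\<dots> = 0"
    by (simp add: matrix_mul_assoc[symmetric] AD)
  finally show ?thesis
    unfolding D_def .
qed

theorem proposition2p3:
  fixes n :: nat and a :: "nat \<Rightarrow> nat \<Rightarrow> int" and R :: "nat \<Rightarrow> complex ^ 's::finite ^ 's"
  assumes "gcm n a" and "symmetrizable n a" and "simply_laced n a"
    and "generalized_spin_rep n a R"
  shows "\<forall>i\<in>{1..n}. \<forall>j\<in>{1..n}. i \<noteq> j \<longrightarrow>
           (a i j = 0 \<longrightarrow> commutator (R i) (R j) = 0) \<and>
           (a i j = -1 \<longrightarrow> anticommutator (R i) (R j) = 0)"
  \<comment> \<open>The commuting case is itself a defining relation of \<open>k_rep\<close>.\<close>
  using assms(4) anticommute_if_square_neg_quarter
  unfolding generalized_spin_rep_def k_rep_def commutator_def anticommutator_def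
  by metis

end
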